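(* Let $a,b,c,x,y,u_1,\dots,u_m$ be independent variables, $g=abx^2+(ay-bc)^2$, and $f\in\mathbb C[a,b,c,u_1,\dots,u_m,x,y]_{abcg}$ (localization at $abcg$). Suppose that for every choice of values $(a^0,b^0,c^0,u^0_1,\dots,u^0_m)$ in some nonempty open subset of $\mathbb C^{m+3}$ and every $\sigma\in\mathbb C$ there is $\tau\in\mathbb C$ such that the level set $\{(x,y)\in\mathbb C^2: g|_{a=a^0,b=b^0,c=c^0,u_i=u_i^0}(x,y)=\sigma\}$ is contained in $\{(x,y)\in\mathbb C^2: f|_{a=a^0,b=b^0,c=c^0,u_i=u_i^0}(x,y)=\tau\}$. Then $f=F(g)$ for some Laurent polynomial $F$ with coefficients in $\mathbb C[a,b,c,u_1,\dots,u_m]_{abc}$. *)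

theory Defs
  imports Complex_Main
begin

text \<open>Points of the affine space C^n are represented as complex lists of length n.
  Polynomial functions in n variables: generated by constants and coordinate
  projections under + and *. (Over the infinite field C these are exactly the
  polynomials of C[X_0,...,X_(n-1)].)\<close>

inductive_set poly_fun :: "nat \<Rightarrow> (complex list \<Rightarrow> complex) set" for n :: nat where
  pf_const: "(\<lambda>v. c) \<in> poly_fun n"
| pf_var: "i < n \<Longrightarrow> (\<lambda>v. v ! i) \<in> poly_fun n"
| pf_add: "p \<in> poly_fun n \<Longrightarrow> q \<in> poly_fun n \<Longrightarrow> (\<lambda>v. p v + q v) \<in> poly_fun n"
| pf_mult: "p \<in> poly_fun n \<Longrightarrow> q \<in> poly_fun n \<Longrightarrow> (\<lambda>v. p v * q v) \<in> poly_fun n"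

definition open_Cn :: "nat \<Rightarrow> complex list set \<Rightarrow> bool" where
  "open_Cn n U \<longleftrightarrow> U \<subseteq> {p. length p = n} \<and>
     (\<forall>p\<in>U. \<exists>e>0. \<forall>q. length q = n \<and> (\<forall>i<n. norm (q ! i - p ! i) < e) \<longrightarrow> q \<in> U)"

text \<open>Variable order in C^(m+5): a = v!0, b = v!1, c = v!2, u_i = v!(2+i) (1 \<le> i \<le> m),
  x = v!(m+3), y = v!(m+4).  g = a b x^2 + (a y - b c)^2.\<close>
definition gfun :: "nat \<Rightarrow> complex list \<Rightarrow> complex" where
  "gfun m v = v!0 * v!1 * (v!(m+3))^2 + (v!0 * v!(m+4) - v!1 * v!2)^2"

text \<open>The element P/(abcg)^k of the localization C[a,b,c,u,x,y]_{abcg},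
  as a function on the locus abcg \<noteq> 0.\<close>
definition loc_fun :: "nat \<Rightarrow> (complex list \<Rightarrow> complex) \<Rightarrow> nat \<Rightarrow> complex list \<Rightarrow> complex" where
  "loc_fun m P k v = P v / (v!0 * v!1 * v!2 * gfun m v) ^ k"

end

theory Submission
  imports Defs "HOL-Computational_Algebra.Polynomial"
begin

text \<open>Along the curve x = 0, y = (bc + t)/a the function g equals t^2, so f restricted to it
  is a polynomial \<rho> in t with coefficients in C[a,b,c,u]_abc. Since t and -t lie on the same level
  set of g, level-set invariance makes f equal to the even part of \<rho>, i.e. to a polynomial in g
  with coefficients in C[a,b,c,u]_abc, at every point over the open parameter set. Clearing the
  denominator turns this into a polynomial identity on an open set, which then holds everywhere;
  dividing by (abcg)^k gives the Laurent polynomial in g.\<close>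

lemma poly_fun_mono: "p \<in> poly_fun n \<Longrightarrow> n \<le> n' \<Longrightarrow> p \<in> poly_fun n'"
  by (induction rule: poly_fun.induct) (auto intro: poly_fun.intros)

lemma poly_fun_take: "p \<in> poly_fun n \<Longrightarrow> p (take n v) = p v"
  by (induction rule: poly_fun.induct) auto

lemma poly_fun_diff: "p \<in> poly_fun n \<Longrightarrow> q \<in> poly_fun n \<Longrightarrow> (\<lambda>v. p v - q v) \<in> poly_fun n"
  using poly_fun.pf_add[of p n "\<lambda>v. (-1) * q v"] poly_fun.pf_mult[OF poly_fun.pf_const[of "-1"], of q]
  by simp

lemma poly_fun_power: "p \<in> poly_fun n \<Longrightarrow> (\<lambda>v. p v ^ k) \<in> poly_fun n"
  by (induction k) (auto intro: poly_fun.intros)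

lemma poly_fun_sum: "(\<And>i. i \<in> A \<Longrightarrow> f i \<in> poly_fun n) \<Longrightarrow> (\<lambda>v. \<Sum>i\<in>A. f i v) \<in> poly_fun n"
  by (induction A rule: infinite_finite_induct) (auto intro: poly_fun.intros)

definition fun_subring :: "('a \<Rightarrow> 'b::comm_ring_1) set \<Rightarrow> bool" where
  "fun_subring R \<longleftrightarrow> (\<forall>c. (\<lambda>_. c) \<in> R) \<and> (\<forall>f\<in>R. \<forall>g\<in>R. (\<lambda>x. f x + g x) \<in> R \<and> (\<lambda>x. f x * g x) \<in> R)"

definition poly_over :: "('a \<Rightarrow> 'b::comm_ring_1) set \<Rightarrow> ('a \<Rightarrow> 'b poly) \<Rightarrow> bool" where
  "poly_over R r \<longleftrightarrow> (\<forall>j. (\<lambda>x. coeff (r x) j) \<in> R) \<and> (\<exists>B. \<forall>x. degree (r x) \<le> B)"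

lemma fun_subring_sum:
  assumes "fun_subring R" and "\<And>i. i \<in> A \<Longrightarrow> f i \<in> R"
  shows "(\<lambda>x. \<Sum>i\<in>A. f i x) \<in> R"
  using assms(2) by (induction A rule: infinite_finite_induct) (use assms(1) in \<open>auto simp: fun_subring_def\<close>)

lemma poly_over_const:
  assumes "fun_subring R" shows "poly_over R (\<lambda>_. [:c:])"
  using assms by (auto simp: poly_over_def fun_subring_def coeff_pCons split: nat.split)

lemma poly_over_add:
  assumes "fun_subring R" "poly_over R r" "poly_over R s"
  shows "poly_over R (\<lambda>x. r x + s x)"
proof -
  obtain B1 B2 where "\<forall>x. degree (r x) \<le> B1" "\<forall>x. degree (s x) \<le> B2"
    using assms(2,3) by (auto simp: poly_over_def)
  then have "\<forall>x. degree (r x + s x) \<le> max B1 B2"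
    by (meson degree_add_le max.coboundedI1 max.coboundedI2)
  then show ?thesis using assms by (auto simp: poly_over_def fun_subring_def)
qed

lemma poly_over_mult:
  assumes R: "fun_subring R" and "poly_over R r" "poly_over R s"
  shows "poly_over R (\<lambda>x. r x * s x)"
proof -
  obtain B1 B2 where "\<forall>x. degree (r x) \<le> B1" "\<forall>x. degree (s x) \<le> B2"
    using assms(2,3) by (auto simp: poly_over_def)
  then have "\<forall>x. degree (r x * s x) \<le> B1 + B2"
    by (meson add_mono degree_mult_le order_trans)
  moreover have "(\<lambda>x. coeff (r x * s x) j) \<in> R" for j
    unfolding coeff_mult
    by (intro fun_subring_sum[OF R]) (use assms in \<open>auto simp: poly_over_def fun_subring_def\<close>)
  ultimately show ?thesis by (auto simp: poly_over_def)
qed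

lemma poly_over_linear:
  assumes "fun_subring R" "f \<in> R" "g \<in> R"
  shows "poly_over R (\<lambda>x. [:f x, g x:])"
proof -
  have "(\<lambda>x. coeff [:f x, g x:] j) \<in> R" for j
  proof (cases j)
    case (Suc i)
    then show ?thesis using assms by (cases i) (auto simp: fun_subring_def)
  qed (use assms in simp)
  then show ?thesis by (auto simp: poly_over_def intro!: exI[of _ 1])
qed

lemma poly_fun_compose_poly_over:
  assumes "D \<in> poly_fun n" and R: "fun_subring R" and \<sigma>: "\<And>i. i < n \<Longrightarrow> poly_over R (\<sigma> i)"
  shows "\<exists>r. poly_over R r \<and> (\<forall>x t. D (map (\<lambda>i. poly (\<sigma> i x) t) [0..<n]) = poly (r x) t)"
  using assms(1)
proof (induction rule: poly_fun.induct)
  case (pf_const c)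
  show ?case by (intro exI[of _ "\<lambda>_. [:c:]"]) (simp add: poly_over_const[OF R])
next
  case (pf_var i)
  then show ?case by (intro exI[of _ "\<sigma> i"]) (simp add: \<sigma>)
next
  case (pf_add p q)
  then obtain r s where "poly_over R r" "poly_over R s"
    "\<forall>x t. p (map (\<lambda>i. poly (\<sigma> i x) t) [0..<n]) = poly (r x) t"
    "\<forall>x t. q (map (\<lambda>i. poly (\<sigma> i x) t) [0..<n]) = poly (s x) t" by blast
  then show ?case by (intro exI[of _ "\<lambda>x. r x + s x"]) (simp add: poly_over_add[OF R])
next
  case (pf_mult p q)
  then obtain r s where "poly_over R r" "poly_over R s"
    "\<forall>x t. p (map (\<lambda>i. poly (\<sigma> i x) t) [0..<n]) = poly (r x) t"
    "\<forall>x t. q (map (\<lambda>i. poly (\<sigma> i x) t) [0..<n]) = poly (s x) t" by blast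
  then show ?case by (intro exI[of _ "\<lambda>x. r x * s x"]) (simp add: poly_over_mult[OF R])
qed

subsection \<open>The identity theorem for polynomial functions\<close>

lemma poly_fun_along_line:
  assumes "D \<in> poly_fun n"
  shows "\<exists>r. \<forall>t. D (map (\<lambda>i. a i + t * b i) [0..<n]) = poly r t"
proof -
  have "fun_subring (UNIV :: (unit \<Rightarrow> complex) set)"
    by (simp add: fun_subring_def)
  moreover have "poly_over UNIV (\<lambda>_::unit. [:a i, b i:])" for i
    by (auto simp: poly_over_def)
  ultimately obtain r :: "unit \<Rightarrow> complex poly"
    where "\<forall>x t. D (map (\<lambda>i. poly [:a i, b i:] t) [0..<n]) = poly (r x) t"
    using poly_fun_compose_poly_over[OF assms, of UNIV "\<lambda>i _. [:a i, b i:]"] by blast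
  then show ?thesis by (auto simp: algebra_simps)
qed

lemma poly_fun_eq_0_if_vanishes_on_open:
  assumes D: "D \<in> poly_fun n" and W: "open_Cn n W" "W \<noteq> {}" and vanish: "\<forall>v\<in>W. D v = 0"
    and q: "length q = n"
  shows "D q = 0"
proof -
  obtain p0 e where "p0 \<in> W" and e: "e > 0"
    and ball: "\<And>v. length v = n \<Longrightarrow> (\<forall>i<n. norm (v!i - p0!i) < e) \<Longrightarrow> v \<in> W"
    using W unfolding open_Cn_def by blast
  define line where "line t = map (\<lambda>i. p0!i + t * (q!i - p0!i)) [0..<n]" for t
  obtain r where r: "\<And>t. D (line t) = poly r t"
    using poly_fun_along_line[OF D, of "(!) p0" "\<lambda>i. q!i - p0!i"] unfolding line_def by blast
  define M where "M = 1 + (\<Sum>i<n. norm (q!i - p0!i))"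
  have "norm (q!i - p0!i) \<le> (\<Sum>j<n. norm (q!j - p0!j))" if "i < n" for i
    using that by (intro member_le_sum) auto
  then have M: "M > 0" "\<And>i. i < n \<Longrightarrow> norm (q!i - p0!i) < M"
    unfolding M_def by (simp_all add: add_pos_nonneg sum_nonneg add.commute add_strict_increasing)
  have "poly r (of_real s) = 0" if s: "0 < s" "s < e / M" for s
  proof -
    have "norm (line (of_real s) ! i - p0!i) < e" if "i < n" for i
    proof -
      have "norm (line (of_real s) ! i - p0!i) = s * norm (q!i - p0!i)"
        using \<open>i < n\<close> s by (simp add: line_def norm_mult)
      also have "\<dots> < s * M" using s M(2)[OF \<open>i < n\<close>] by (intro mult_strict_left_mono)
      also have "\<dots> < e" using s M(1) by (simp add: field_simps)
      finally show ?thesis .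
    qed
    then have "line (of_real s) \<in> W" by (intro ball) (simp_all add: line_def)
    then show ?thesis using vanish r by metis
  qed
  then have "of_real ` {0<..<e / M} \<subseteq> {t. poly r t = 0}"
    by auto
  moreover have "infinite (of_real ` {0<..<e / M} :: complex set)"
    using e M(1) by (simp add: finite_image_iff inj_on_def)
  ultimately have "r = 0"
    using poly_roots_finite finite_subset by blast
  moreover have "line 1 = q"
    using q map_nth[of q] by (simp add: line_def)
  ultimately show ?thesis using r[of 1] by simp
qed

lemma poly_fun_eq_0_if_vanishes_on_open_where_nonzero:
  assumes D: "D \<in> poly_fun n" and h: "h \<in> poly_fun n" and W: "open_Cn n W" "W \<noteq> {}"
    and vanish: "\<forall>v\<in>W. h v \<noteq> 0 \<longrightarrow> D v = 0"
    and v: "length v = n" "h v \<noteq> 0"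
  shows "D v = 0"
proof -
  have "(\<lambda>v. D v * h v) \<in> poly_fun n" using D h by (rule poly_fun.pf_mult)
  moreover have "\<forall>v\<in>W. D v * h v = 0" using vanish by auto
  ultimately have "D v * h v = 0"
    using poly_fun_eq_0_if_vanishes_on_open[OF _ W, of "\<lambda>v. D v * h v"] v(1) by blast
  then show ?thesis using v(2) by simp
qed

lemma open_Cn_take_preimage:
  assumes "open_Cn n U"
  shows "open_Cn (n + k) {v. length v = n + k \<and> take n v \<in> U}"
  unfolding open_Cn_def
proof (intro conjI ballI)
  show "{v. length v = n + k \<and> take n v \<in> U} \<subseteq> {p. length p = n + k}" by blast
  fix v assume v: "v \<in> {v. length v = n + k \<and> take n v \<in> U}"
  then obtain e where "e > 0"
    and e: "\<And>q. length q = n \<Longrightarrow> (\<forall>i<n. norm (q!i - take n v ! i) < e) \<Longrightarrow> q \<in> U"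
  proof -
    have "take n v \<in> U" using v by simp
    then show ?thesis using assms that unfolding open_Cn_def by metis
  qed
  have "take n q \<in> U" if "length q = n + k" "\<forall>i<n + k. norm (q!i - v!i) < e" for q
    by (rule e) (use that in simp_all)
  then show "\<exists>e>0. \<forall>q. length q = n + k \<and> (\<forall>i<n + k. norm (q!i - v!i) < e)
      \<longrightarrow> q \<in> {v. length v = n + k \<and> take n v \<in> U}"
    using \<open>e > 0\<close> by blast
qed

definition localized_poly_fun :: "nat \<Rightarrow> (complex list \<Rightarrow> complex) \<Rightarrow> (complex list \<Rightarrow> complex) set" where
  "localized_poly_fun n d = {f. \<exists>Q l. Q \<in> poly_fun n \<and> (\<forall>p. d p \<noteq> 0 \<longrightarrow> f p = Q p / d p ^ l)}"

lemma fun_subring_localized_poly_fun: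
  assumes d: "d \<in> poly_fun n"
  shows "fun_subring (localized_poly_fun n d)"
  unfolding fun_subring_def
proof (intro conjI allI ballI)
  show "(\<lambda>_. c) \<in> localized_poly_fun n d" for c
    unfolding localized_poly_fun_def
    by (intro CollectI exI[of _ "\<lambda>_. c"] exI[of _ 0]) (simp add: poly_fun.pf_const)
  fix f g assume "f \<in> localized_poly_fun n d" "g \<in> localized_poly_fun n d"
  then obtain Q1 l1 Q2 l2 where Q: "Q1 \<in> poly_fun n" "Q2 \<in> poly_fun n"
    and f: "\<And>p. d p \<noteq> 0 \<Longrightarrow> f p = Q1 p / d p ^ l1"
    and g: "\<And>p. d p \<noteq> 0 \<Longrightarrow> g p = Q2 p / d p ^ l2"
    unfolding localized_poly_fun_def by blast
  have "(\<lambda>p. Q1 p * d p ^ l2 + Q2 p * d p ^ l1) \<in> poly_fun n"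
    by (intro poly_fun.pf_add poly_fun.pf_mult poly_fun_power Q d)
  moreover have "f p + g p = (Q1 p * d p ^ l2 + Q2 p * d p ^ l1) / d p ^ (l1 + l2)" if "d p \<noteq> 0" for p
    using that by (simp add: f g add_divide_distrib power_add)
  ultimately show "(\<lambda>p. f p + g p) \<in> localized_poly_fun n d"
    unfolding localized_poly_fun_def by blast
  have "(\<lambda>p. Q1 p * Q2 p) \<in> poly_fun n"
    by (intro poly_fun.pf_mult Q)
  moreover have "f p * g p = Q1 p * Q2 p / d p ^ (l1 + l2)" if "d p \<noteq> 0" for p
    using that by (simp add: f g power_add)
  ultimately show "(\<lambda>p. f p * g p) \<in> localized_poly_fun n d"
    unfolding localized_poly_fun_def by blast
qed

lemma localized_poly_fun_common_denominator:
  assumes d: "d \<in> poly_fun n" and f: "\<And>i. i \<in> I \<Longrightarrow> f i \<in> localized_poly_fun n d" and "finite I"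
  shows "\<exists>Q l. (\<forall>i\<in>I. Q i \<in> poly_fun n) \<and> (\<forall>i\<in>I. \<forall>p. d p \<noteq> 0 \<longrightarrow> f i p = Q i p / d p ^ l)"
proof -
  have "\<forall>i\<in>I. \<exists>Q l. Q \<in> poly_fun n \<and> (\<forall>p. d p \<noteq> 0 \<longrightarrow> f i p = Q p / d p ^ l)"
    using f unfolding localized_poly_fun_def by blast
  then obtain Q where "\<forall>i\<in>I. \<exists>l. Q i \<in> poly_fun n \<and> (\<forall>p. d p \<noteq> 0 \<longrightarrow> f i p = Q i p / d p ^ l)"
    by (rule bchoice[elim_format]) blast
  then obtain l where "\<forall>i\<in>I. Q i \<in> poly_fun n \<and> (\<forall>p. d p \<noteq> 0 \<longrightarrow> f i p = Q i p / d p ^ l i)"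
    by (rule bchoice[elim_format]) blast
  then have Q: "\<And>i. i \<in> I \<Longrightarrow> Q i \<in> poly_fun n"
    and fQ: "\<And>i p. i \<in> I \<Longrightarrow> d p \<noteq> 0 \<Longrightarrow> f i p = Q i p / d p ^ l i"
    by auto
  define L where "L = (\<Sum>i\<in>I. l i)"
  have "l i \<le> L" if "i \<in> I" for i
    unfolding L_def using \<open>finite I\<close> that by (intro member_le_sum) auto
  then have "f i p = Q i p * d p ^ (L - l i) / d p ^ L" if "i \<in> I" "d p \<noteq> 0" for i p
    using that fQ by (simp add: power_diff)
  moreover have "(\<lambda>p. Q i p * d p ^ (L - l i)) \<in> poly_fun n" if "i \<in> I" for i
    using that by (intro poly_fun.pf_mult poly_fun_power Q d)
  ultimately show ?thesis
    by (intro exI[of _ "\<lambda>i p. Q i p * d p ^ (L - l i)"] exI[of _ L]) blast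
qed

subsection \<open>Restriction to a curve on which g is a square\<close>

definition abc :: "complex list \<Rightarrow> complex" where
  "abc p = p!0 * p!1 * p!2"

lemma abc_poly_fun: "2 < n \<Longrightarrow> abc \<in> poly_fun n"
  unfolding abc_def by (intro poly_fun.intros) auto

lemma gfun_poly_fun: "gfun m \<in> poly_fun (m + 5)"
  unfolding gfun_def by (intro poly_fun.intros poly_fun_power poly_fun_diff) auto

lemma gfun_append:
  "length p = m + 3 \<Longrightarrow> gfun m (p @ [x, y]) = p!0 * p!1 * x^2 + (p!0 * y - p!1 * p!2)^2"
  by (simp add: gfun_def nth_append)

lemma gfun_on_square_curve:
  "length p = m + 3 \<Longrightarrow> p!0 \<noteq> 0 \<Longrightarrow> gfun m (p @ [0, (p!1 * p!2 + t) / p!0]) = t^2"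
  by (simp add: gfun_append field_simps)

lemma take_append_last_two: "length v = n + 2 \<Longrightarrow> take n v @ [v!n, v!Suc n] = v"
  using append_take_drop_id[of n v] Cons_nth_drop_Suc[of n v] Cons_nth_drop_Suc[of "Suc n" v] by simp

lemma poly_fun_along_square_curve:
  assumes P: "P \<in> poly_fun (m + 5)"
  shows "\<exists>r. poly_over (localized_poly_fun (m + 3) abc) r \<and>
           (\<forall>p t. length p = m + 3 \<longrightarrow> P (p @ [0, (p!1 * p!2 + t) / p!0]) = poly (r p) t)"
proof -
  let ?R = "localized_poly_fun (m + 3) abc"
  have R: "fun_subring ?R"
    by (intro fun_subring_localized_poly_fun abc_poly_fun) simp
  have poly_fun_R: "Q \<in> ?R" if "Q \<in> poly_fun (m + 3)" for Q
    using that unfolding localized_poly_fun_def by (intro CollectI exI[of _ Q] exI[of _ 0]) simp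
  have inverse_a: "(\<lambda>p. 1 / p!0) \<in> ?R" and bc_over_a: "(\<lambda>p. p!1 * p!2 / p!0) \<in> ?R"
    unfolding localized_poly_fun_def abc_def
    by (intro CollectI exI[of _ "\<lambda>p. p!1 * p!2"] exI[of _ "\<lambda>p. (p!1 * p!2)^2"] exI[of _ 1]
        conjI poly_fun.intros poly_fun_power; simp add: power2_eq_square)+
  define a :: "nat \<Rightarrow> complex list \<Rightarrow> complex"
    where "a i p = (if i < m + 3 then p!i else if i = m + 3 then 0 else p!1 * p!2 / p!0)" for i p
  define b :: "nat \<Rightarrow> complex list \<Rightarrow> complex"
    where "b i p = (if i = m + 4 then 1 / p!0 else 0)" for i p
  have "a i \<in> ?R" for i
    using R bc_over_a poly_fun_R[OF poly_fun.pf_var[of i "m + 3"]]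
    by (cases "i < m + 3"; cases "i = m + 3") (simp_all add: a_def[abs_def] fun_subring_def)
  moreover have "b i \<in> ?R" for i
    using R inverse_a by (cases "i = m + 4") (simp_all add: b_def[abs_def] fun_subring_def)
  ultimately obtain r where r: "poly_over ?R r"
    and Pr: "\<forall>p t. P (map (\<lambda>i. poly [:a i p, b i p:] t) [0..<m + 5]) = poly (r p) t"
    using poly_fun_compose_poly_over[OF P R, of "\<lambda>i p. [:a i p, b i p:]"] poly_over_linear[OF R]
    by blast
  have curve: "map (\<lambda>i. poly [:a i p, b i p:] t) [0..<m + 5] = p @ [0, (p!1 * p!2 + t) / p!0]"
    if p: "length p = m + 3" for p t
  proof (rule nth_equalityI)
    fix i assume "i < length (map (\<lambda>i. poly [:a i p, b i p:] t) [0..<m + 5])"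
    then consider "i < m + 3" | "i = m + 3" | "i = m + 4" by force
    then show "map (\<lambda>i. poly [:a i p, b i p:] t) [0..<m + 5] ! i = (p @ [0, (p!1 * p!2 + t) / p!0]) ! i"
      by cases (simp_all add: p a_def b_def nth_append add_divide_distrib)
  qed (simp add: p)
  have "P (p @ [0, (p!1 * p!2 + t) / p!0]) = poly (r p) t" if "length p = m + 3" for p t
    using Pr[rule_format, of p t] unfolding curve[OF that] .
  with r show ?thesis by blast
qed

subsection \<open>Level-set invariance forces evenness\<close>

lemma poly_plus_poly_minus:
  fixes \<rho> :: "'a::comm_ring_1 poly"
  assumes "degree \<rho> \<le> B"
  shows "poly \<rho> s + poly \<rho> (-s) = 2 * (\<Sum>i\<le>B. coeff \<rho> (2 * i) * (s^2)^i)"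
proof -
  have "poly \<rho> x = (\<Sum>i\<le>Suc (2 * B). coeff \<rho> i * x^i)" for x
    unfolding poly_altdef using assms by (intro sum.mono_neutral_left) (auto simp: coeff_eq_0)
  then have "poly \<rho> s + poly \<rho> (-s) = (\<Sum>i\<le>Suc (2 * B). coeff \<rho> i * (s^i + (-s)^i))"
    by (simp add: sum.distrib distrib_left)
  also have "\<dots> = (\<Sum>i\<le>B. coeff \<rho> (2 * i) * (s^(2 * i) + (-s)^(2 * i))
      + coeff \<rho> (Suc (2 * i)) * (s^Suc (2 * i) + (-s)^Suc (2 * i)))"
    by (rule sum.in_pairs_0)
  also have "\<dots> = 2 * (\<Sum>i\<le>B. coeff \<rho> (2 * i) * (s^2)^i)"
    by (simp add: sum_distrib_left power_mult mult.left_commute)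
  finally show ?thesis .
qed

lemma level_set_invariant_even_expansion:
  fixes P :: "complex list \<Rightarrow> complex" and \<rho> :: "complex poly"
  assumes curve: "\<forall>t. P (p @ [0, (p!1 * p!2 + t) / p!0]) = poly \<rho> t" and deg: "degree \<rho> \<le> B"
    and invariant: "\<forall>\<sigma>. \<exists>\<tau>. \<forall>x y.
           (p!0 * p!1 * p!2 \<noteq> 0 \<and> gfun m (p @ [x, y]) \<noteq> 0 \<and> gfun m (p @ [x, y]) = \<sigma>)
           \<longrightarrow> loc_fun m P k (p @ [x, y]) = \<tau>"
    and p: "length p = m + 3" "p!0 * p!1 * p!2 \<noteq> 0" and G: "gfun m (p @ [x, y]) \<noteq> 0"
  shows "P (p @ [x, y]) = (\<Sum>i\<le>B. coeff \<rho> (2 * i) * gfun m (p @ [x, y]) ^ i)"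
proof -
  define G where "G = gfun m (p @ [x, y])"
  have loc_fun_eq: "loc_fun m P k (p @ [x', y']) = P (p @ [x', y']) / (p!0 * p!1 * p!2 * gfun m (p @ [x', y'])) ^ k"
    for x' y' by (simp add: loc_fun_def nth_append p(1))
  have same_level: "P (p @ [x', y']) = P (p @ [x, y])" if "gfun m (p @ [x', y']) = G" for x' y'
  proof -
    obtain \<tau> where "\<forall>x y. (p!0 * p!1 * p!2 \<noteq> 0 \<and> gfun m (p @ [x, y]) \<noteq> 0 \<and> gfun m (p @ [x, y]) = G)
        \<longrightarrow> loc_fun m P k (p @ [x, y]) = \<tau>"
      using invariant by blast
    then have "loc_fun m P k (p @ [x', y']) = loc_fun m P k (p @ [x, y])"
      using that p(2) G unfolding G_def by simp
    moreover have "(p!0 * p!1 * p!2 * G) ^ k \<noteq> 0" using p(2) G unfolding G_def by simp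
    ultimately show ?thesis using that p(2) G unfolding loc_fun_eq G_def by simp
  qed
  \<comment> \<open>both square roots of G lie on the level set of (x, y)\<close>
  have "poly \<rho> t = P (p @ [x, y])" if "t^2 = G" for t
    using curve[rule_format, of t] same_level gfun_on_square_curve[OF p(1)] p(2) that by simp
  then have "2 * P (p @ [x, y]) = 2 * (\<Sum>i\<le>B. coeff \<rho> (2 * i) * (csqrt G ^ 2) ^ i)"
    using poly_plus_poly_minus[OF deg, of "csqrt G"] by simp
  then show ?thesis unfolding G_def by simp
qed

subsection \<open>Clearing denominators and the Laurent expansion\<close>

lemma cleared_gfun_expansion:
  fixes P :: "complex list \<Rightarrow> complex"
  assumes P: "P \<in> poly_fun (m + 5)" and U: "U \<noteq> {}" "open_Cn (m + 3) U"
    and invariant: "\<forall>p\<in>U. \<forall>\<sigma>. \<exists>\<tau>. \<forall>x y.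
           (p!0 * p!1 * p!2 \<noteq> 0 \<and> gfun m (p @ [x, y]) \<noteq> 0 \<and> gfun m (p @ [x, y]) = \<sigma>)
           \<longrightarrow> loc_fun m P k (p @ [x, y]) = \<tau>"
  shows "\<exists>Q L B. (\<forall>i\<le>B. Q i \<in> poly_fun (m + 3)) \<and>
           (\<forall>v. length v = m + 5 \<and> abc v * gfun m v \<noteq> 0 \<longrightarrow>
              P v * abc v ^ L = (\<Sum>i\<le>B. Q i v * gfun m v ^ i))"
proof -
  obtain r where r: "poly_over (localized_poly_fun (m + 3) abc) r"
    and curve: "\<And>p t. length p = m + 3 \<Longrightarrow> P (p @ [0, (p!1 * p!2 + t) / p!0]) = poly (r p) t"
    using poly_fun_along_square_curve[OF P] by blast
  obtain B where deg: "\<And>p. degree (r p) \<le> B"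
    using r unfolding poly_over_def by blast
  have "\<exists>Q L. (\<forall>i\<in>{..B}. Q i \<in> poly_fun (m + 3)) \<and>
      (\<forall>i\<in>{..B}. \<forall>p. abc p \<noteq> 0 \<longrightarrow> coeff (r p) (2 * i) = Q i p / abc p ^ L)"
    using r by (intro localized_poly_fun_common_denominator abc_poly_fun) (auto simp: poly_over_def)
  then obtain Q L where Q: "\<And>i. i \<le> B \<Longrightarrow> Q i \<in> poly_fun (m + 3)"
    and coeff_r: "\<And>i p. i \<le> B \<Longrightarrow> abc p \<noteq> 0 \<Longrightarrow> coeff (r p) (2 * i) = Q i p / abc p ^ L"
    unfolding atMost_iff by blast
  define D where "D v = P v * abc v ^ L - (\<Sum>i\<le>B. Q i v * gfun m v ^ i)" for v
  define W where "W = {v. length v = m + 5 \<and> take (m + 3) v \<in> U}"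
  have "D v = 0" if v: "v \<in> W" "abc v * gfun m v \<noteq> 0" for v
  proof -
    define p where "p = take (m + 3) v"
    have p: "p \<in> U" "length p = m + 3" "v = p @ [v!(m + 3), v!(m + 4)]"
      using v take_append_last_two[of v "m + 3"] unfolding W_def p_def by (auto simp: add.commute[of 4 m])
    have abc_p: "abc p = abc v" unfolding p_def abc_def by simp
    have "P (p @ [v!(m + 3), v!(m + 4)])
        = (\<Sum>i\<le>B. coeff (r p) (2 * i) * gfun m (p @ [v!(m + 3), v!(m + 4)]) ^ i)"
    proof (rule level_set_invariant_even_expansion[OF _ deg bspec[OF invariant p(1)] p(2)])
      show "p!0 * p!1 * p!2 \<noteq> 0" using v(2) abc_p unfolding abc_def by simp
      show "gfun m (p @ [v!(m + 3), v!(m + 4)]) \<noteq> 0" using v(2) p(3) by simp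
    qed (use curve[OF p(2)] in blast)
    then have "P v = (\<Sum>i\<le>B. coeff (r p) (2 * i) * gfun m v ^ i)"
      unfolding p(3)[symmetric] .
    also have "\<dots> = (\<Sum>i\<le>B. Q i v * gfun m v ^ i) / abc v ^ L"
      using v(2) abc_p by (simp add: sum_divide_distrib coeff_r p_def poly_fun_take[OF Q])
    finally show ?thesis using v(2) unfolding D_def by simp
  qed
  moreover have "D \<in> poly_fun (m + 5)"
    unfolding D_def[abs_def]
    by (intro poly_fun_diff poly_fun.pf_mult poly_fun_power poly_fun_sum P abc_poly_fun gfun_poly_fun
        poly_fun_mono[OF Q]) auto
  moreover have "(\<lambda>v. abc v * gfun m v) \<in> poly_fun (m + 5)"
    by (intro poly_fun.pf_mult abc_poly_fun gfun_poly_fun) simp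
  moreover have "open_Cn (m + 5) W"
    using open_Cn_take_preimage[OF U(2), of 2] unfolding W_def by (simp add: add.commute[of 5 m])
  moreover have "W \<noteq> {}"
  proof -
    obtain p where "p \<in> U" using U(1) by blast
    moreover from this have "length p = m + 3" using U(2) unfolding open_Cn_def by blast
    ultimately have "p @ [0, 0] \<in> W" unfolding W_def by simp
    then show ?thesis by blast
  qed
  ultimately have "D v = 0" if "length v = m + 5" "abc v * gfun m v \<noteq> 0" for v
    using poly_fun_eq_0_if_vanishes_on_open_where_nonzero that by blast
  then show ?thesis using Q unfolding D_def by (intro exI[of _ Q] exI[of _ L] exI[of _ B]) auto
qed

lemma sum_divide_power_eq_sum_power_int:
  fixes G :: "'a::field" and c :: "nat \<Rightarrow> 'a"
  assumes "G \<noteq> 0"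
  shows "(\<Sum>i\<le>B. c i * G ^ i) / G ^ k =
    (\<Sum>j\<in>{-int (B + k)..int (B + k)}.
       (if 0 \<le> j + int k \<and> j + int k \<le> int B then c (nat (j + int k)) else 0) * G powi j)"
proof -
  let ?c = "\<lambda>j. if 0 \<le> j + int k \<and> j + int k \<le> int B then c (nat (j + int k)) else 0"
  have "(\<Sum>j\<in>{-int (B + k)..int (B + k)}. ?c j * G powi j) = (\<Sum>j\<in>(\<lambda>i. int i - int k) ` {..B}. ?c j * G powi j)"
  proof (rule sum.mono_neutral_right)
    show "\<forall>j\<in>{-int (B + k)..int (B + k)} - (\<lambda>i. int i - int k) ` {..B}. ?c j * G powi j = 0"
    proof
      fix j assume j: "j \<in> {-int (B + k)..int (B + k)} - (\<lambda>i. int i - int k) ` {..B}"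
      have "\<not> (0 \<le> j + int k \<and> j + int k \<le> int B)"
      proof
        assume "0 \<le> j + int k \<and> j + int k \<le> int B"
        then have "nat (j + int k) \<in> {..B}" "j = int (nat (j + int k)) - int k" by auto
        then show False using j by blast
      qed
      then show "?c j * G powi j = 0" by auto
    qed
  qed auto
  also have "\<dots> = (\<Sum>i\<le>B. c i * G powi (int i - int k))"
    by (subst sum.reindex) (auto simp: inj_on_def)
  also have "\<dots> = (\<Sum>i\<le>B. c i * G ^ i / G ^ k)"
    using assms by (simp add: power_int_diff)
  finally show ?thesis by (simp add: sum_divide_distrib)
qed

theorem lemma10:
  fixes m k :: nat and P :: "complex list \<Rightarrow> complex" and U :: "complex list set"
  assumes "P \<in> poly_fun (m + 5)"
    and "U \<noteq> {}" and "open_Cn (m + 3) U"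
    and "\<forall>p\<in>U. \<forall>\<sigma>. \<exists>\<tau>. \<forall>x y.
           (p!0 * p!1 * p!2 \<noteq> 0 \<and> gfun m (p @ [x, y]) \<noteq> 0 \<and> gfun m (p @ [x, y]) = \<sigma>)
           \<longrightarrow> loc_fun m P k (p @ [x, y]) = \<tau>"
  shows "\<exists>(N::int) (C :: int \<Rightarrow> complex list \<Rightarrow> complex).
           (\<forall>j. \<exists>Q l. Q \<in> poly_fun (m + 3) \<and> (\<forall>p. C j p = Q p / (p!0 * p!1 * p!2) ^ l)) \<and>
           (\<forall>v. length v = m + 5 \<and> v!0 * v!1 * v!2 * gfun m v \<noteq> 0 \<longrightarrow>
              loc_fun m P k v = (\<Sum>j\<in>{-N..N}. C j (take (m + 3) v) * (gfun m v) powi j))"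
proof -
  obtain Q L B where Q: "\<forall>i\<le>B. Q i \<in> poly_fun (m + 3)"
    and expansion: "\<forall>v. length v = m + 5 \<and> abc v * gfun m v \<noteq> 0 \<longrightarrow>
                      P v * abc v ^ L = (\<Sum>i\<le>B. Q i v * gfun m v ^ i)"
    using cleared_gfun_expansion[OF assms] by blast
  define C where "C j p = (if 0 \<le> j + int k \<and> j + int k \<le> int B
      then Q (nat (j + int k)) p / abc p ^ (L + k) else 0)" for j p
  have "\<exists>Q' l. Q' \<in> poly_fun (m + 3) \<and> (\<forall>p. C j p = Q' p / (p!0 * p!1 * p!2) ^ l)" for j
    by (intro exI[of _ "if 0 \<le> j + int k \<and> j + int k \<le> int B then Q (nat (j + int k)) else (\<lambda>_. 0)"]
        exI[of _ "L + k"]) (auto simp: C_def abc_def Q poly_fun.pf_const)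
  moreover have "loc_fun m P k v = (\<Sum>j\<in>{-int (B + k)..int (B + k)}. C j (take (m + 3) v) * gfun m v powi j)"
    if v: "length v = m + 5" "v!0 * v!1 * v!2 * gfun m v \<noteq> 0" for v
  proof -
    have abc: "abc (take (m + 3) v) = abc v" "abc v * gfun m v \<noteq> 0"
      using v(2) by (simp_all add: abc_def)
    have P_v: "P v = (\<Sum>i\<le>B. Q i v * gfun m v ^ i) / abc v ^ L"
      using expansion v(1) abc(2) by (simp add: eq_divide_eq)
    have "loc_fun m P k v = P v / (abc v * gfun m v) ^ k"
      by (simp add: loc_fun_def abc_def)
    also have "\<dots> = (\<Sum>i\<le>B. Q i (take (m + 3) v) / abc (take (m + 3) v) ^ (L + k) * gfun m v ^ i)
        / gfun m v ^ k"
      unfolding P_v using abc Q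
      by (simp add: sum_divide_distrib poly_fun_take power_add power_mult_distrib field_simps)
    also have "\<dots> = (\<Sum>j\<in>{-int (B + k)..int (B + k)}. C j (take (m + 3) v) * gfun m v powi j)"
      unfolding C_def using abc(2) by (intro sum_divide_power_eq_sum_power_int) simp
    finally show ?thesis .
  qed
  ultimately show ?thesis by blast
qed

end
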